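(* Suppose $1/n\ll\varepsilon\ll\varepsilon_1\ll\eta_1\ll\tau\ll1$. Let $G$ be a digraph on $n$ vertices with $\delta^0(G)\geq n/2$ and let $A,B,S,T$ be a partition of $V(G)$ satisfying the $ABST$-conditions. Let $L_1,L_2$ be oriented paths of length eight, and for each $i\in\{1,2\}$ let $(X_i,Y_i)\in\{(A,B),(B,A)\}$ be prescribed. Then $G$ contains vertex-disjoint copies $L_1^G,L_2^G$ of $L_1,L_2$ such that each $L_i^G$ is a useful path and is an $X_iY_i$-path.
   Context: Digraphs have no loops and at most one edge in each direction between two vertices; $\delta^0$ is the minimum semidegree; $d^+_X(x)=|N^+(x)\cap X|$, $d^-_X(x)=|N^-(x)\cap X|$, $d^\pm_X(x)\geq c$ means both $\geq c$; $G[A,B]$ is the digraph on $A\cup B$ with edges of $G$ between $A$ and $B$ in either direction. The $ABST$-conditions on a partition $A,B,S,T$ of sizes $a,b,s,t$: $a\leq b$, $s\leq t$; $a,b,s,t\geq\tau n$; $|a-b|,|s-t|\leq\varepsilon_1 n$; $\delta^0(G[A,B])\geq\eta_1 n$; $d^+_{B\cup S}(x),d^-_{A\cup S}(x)\geq\eta_1 n$ for all $x\in S$; $d^+_{A\cup T}(x),d^-_{B\cup T}(x)\geq\eta_1n$ for all $x\in T$; $d^\pm_B(x)\geq b-\varepsilon^{1/3}n$ for all but at most $\varepsilon_1n$ vertices $x\in A$; $d^\pm_A(x)\geq a-\varepsilon^{1/3}n$ for all but at most $\varepsilon_1 n$ vertices $x\in B$; $d^+_{B\cup S}(x)\geq b+s-\varepsilon^{1/3}n$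 and $d^-_{A\cup S}(x)\geq a+s-\varepsilon^{1/3}n$ for all but at most $\varepsilon_1n$ vertices $x\in S$; $d^+_{A\cup T}(x)\geq a+t-\varepsilon^{1/3}n$ and $d^-_{B\cup T}(x)\geq b+t-\varepsilon^{1/3}n$ for all but at most $\varepsilon_1 n$ vertices $x\in T$. A copy of an oriented path is an injective edge- and orientation-preserving map into $G$; it is an $XY$-path if the initial vertex maps into $X$ and the final vertex into $Y$. For a path $x_1\dots x_q$ in $G$, consider the subsequence of its vertices in $A\cup B$; a vertex of this subsequence in $A$ (resp. $B$) whose predecessor in the subsequence is also in $A$ (resp. $B$) is a repeated $A$ (resp. repeated $B$). A path in $G$ is useful if it is an $AB$-path or a $BA$-path, has no repeated $A$s and no repeated $B$s, and contains an odd number of vertices of $S\cup T$. The hierarchy $\alpha\ll\beta$ means $\alpha$ is sufficiently small as a function of $\beta$. *)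

theory Defs
  imports Complex_Main
begin

text \<open>A digraph is a finite vertex set V with an edge relation E (E x y: edge from x to y),
  irreflexive (no loops) and contained in V. At most one edge in each direction is automatic.\<close>
definition digraph :: "'a set \<Rightarrow> ('a \<Rightarrow> 'a \<Rightarrow> bool) \<Rightarrow> bool" where
  "digraph V E \<longleftrightarrow> finite V \<and> (\<forall>x y. E x y \<longrightarrow> x \<in> V \<and> y \<in> V \<and> x \<noteq> y)"

definition outdeg_in :: "('a \<Rightarrow> 'a \<Rightarrow> bool) \<Rightarrow> 'a set \<Rightarrow> 'a \<Rightarrow> nat" where
  "outdeg_in E X x = card {y \<in> X. E x y}"

definition indeg_in :: "('a \<Rightarrow> 'a \<Rightarrow> bool) \<Rightarrow> 'a set \<Rightarrow> 'a \<Rightarrow> nat" where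
  "indeg_in E X x = card {y \<in> X. E y x}"

definition min_semideg_ge :: "'a set \<Rightarrow> ('a \<Rightarrow> 'a \<Rightarrow> bool) \<Rightarrow> real \<Rightarrow> bool" where
  "min_semideg_ge V E c \<longleftrightarrow>
     (\<forall>x\<in>V. real (outdeg_in E V x) \<ge> c \<and> real (indeg_in E V x) \<ge> c)"

definition ABST_conditions ::
  "'a set \<Rightarrow> ('a \<Rightarrow> 'a \<Rightarrow> bool) \<Rightarrow> 'a set \<Rightarrow> 'a set \<Rightarrow> 'a set \<Rightarrow> 'a set \<Rightarrow>
   nat \<Rightarrow> real \<Rightarrow> real \<Rightarrow> real \<Rightarrow> real \<Rightarrow> bool" where
  "ABST_conditions V E A B S T n \<tau> \<epsilon>\<^sub>1 \<eta>\<^sub>1 \<epsilon> \<longleftrightarrow>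
    (let a = real (card A); b = real (card B); s = real (card S); t = real (card T);
         r = \<epsilon> powr (1/3) * real n in
     a \<le> b \<and> s \<le> t \<and>
     a \<ge> \<tau> * real n \<and> b \<ge> \<tau> * real n \<and> s \<ge> \<tau> * real n \<and> t \<ge> \<tau> * real n \<and>
     \<bar>a - b\<bar> \<le> \<epsilon>\<^sub>1 * real n \<and> \<bar>s - t\<bar> \<le> \<epsilon>\<^sub>1 * real n \<and>
     (\<forall>x\<in>A. real (outdeg_in E B x) \<ge> \<eta>\<^sub>1 * real n \<and> real (indeg_in E B x) \<ge> \<eta>\<^sub>1 * real n) \<and>
     (\<forall>x\<in>B. real (outdeg_in E A x) \<ge> \<eta>\<^sub>1 * real n \<and> real (indeg_in E A x) \<ge> \<eta>\<^sub>1 * real n) \<and>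
     (\<forall>x\<in>S. real (outdeg_in E (B \<union> S) x) \<ge> \<eta>\<^sub>1 * real n \<and> real (indeg_in E (A \<union> S) x) \<ge> \<eta>\<^sub>1 * real n) \<and>
     (\<forall>x\<in>T. real (outdeg_in E (A \<union> T) x) \<ge> \<eta>\<^sub>1 * real n \<and> real (indeg_in E (B \<union> T) x) \<ge> \<eta>\<^sub>1 * real n) \<and>
     real (card {x\<in>A. \<not> (real (outdeg_in E B x) \<ge> b - r \<and> real (indeg_in E B x) \<ge> b - r)}) \<le> \<epsilon>\<^sub>1 * real n \<and>
     real (card {x\<in>B. \<not> (real (outdeg_in E A x) \<ge> a - r \<and> real (indeg_in E A x) \<ge> a - r)}) \<le> \<epsilon>\<^sub>1 * real n \<and>
     real (card {x\<in>S. \<not> (real (outdeg_in E (B \<union> S) x) \<ge> b + s - r \<and> real (indeg_in E (A \<union> S) x) \<ge> a + s - r)}) \<le> \<epsilon>\<^sub>1 * real n \<and>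
     real (card {x\<in>T. \<not> (real (outdeg_in E (A \<union> T) x) \<ge> a + t - r \<and> real (indeg_in E (B \<union> T) x) \<ge> b + t - r)}) \<le> \<epsilon>\<^sub>1 * real n)"

text \<open>An oriented path of length k is given by a list of k orientations:
  entry i = True means the i-th edge is directed from vertex i to vertex i+1,
  False means from vertex i+1 to vertex i.\<close>
definition is_copy :: "'a set \<Rightarrow> ('a \<Rightarrow> 'a \<Rightarrow> bool) \<Rightarrow> bool list \<Rightarrow> (nat \<Rightarrow> 'a) \<Rightarrow> bool" where
  "is_copy V E L f \<longleftrightarrow> inj_on f {0..length L} \<and> f ` {0..length L} \<subseteq> V \<and>
     (\<forall>i < length L. if L ! i then E (f i) (f (Suc i)) else E (f (Suc i)) (f i))"

definition path_verts :: "bool list \<Rightarrow> (nat \<Rightarrow> 'a) \<Rightarrow> 'a list" where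
  "path_verts L f = map f [0..<Suc (length L)]"

definition is_XY_path :: "'a set \<Rightarrow> 'a set \<Rightarrow> 'a list \<Rightarrow> bool" where
  "is_XY_path X Y ps \<longleftrightarrow> ps \<noteq> [] \<and> hd ps \<in> X \<and> last ps \<in> Y"

definition no_repeats :: "'a set \<Rightarrow> 'a set \<Rightarrow> 'a list \<Rightarrow> bool" where
  "no_repeats A B ps \<longleftrightarrow>
     (let q = filter (\<lambda>x. x \<in> A \<union> B) ps in
      \<forall>j. Suc j < length q \<longrightarrow>
         \<not> (q ! j \<in> A \<and> q ! Suc j \<in> A) \<and> \<not> (q ! j \<in> B \<and> q ! Suc j \<in> B))"

definition useful_path :: "'a set \<Rightarrow> 'a set \<Rightarrow> 'a set \<Rightarrow> 'a set \<Rightarrow> 'a list \<Rightarrow> bool" where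
  "useful_path A B S T ps \<longleftrightarrow>
     (is_XY_path A B ps \<or> is_XY_path B A ps) \<and> no_repeats A B ps \<and>
     odd (length (filter (\<lambda>x. x \<in> S \<union> T) ps))"

end

theory Submission
  imports Defs
begin

(* A vertex of a part is typical if it sends/receives edges to/from all but r vertices of
   the parts the ABST-conditions predict (A <-> B, S -> B u S, A u S -> S, T -> A u T,
   B u T -> T).  A path is embedded along a code: a word over the four parts, one letter per
   path vertex, whose A/B-letters alternate, which starts and ends on the prescribed sides and
   has an odd number of S/T-letters; every embedding respecting such a code is useful.  If
   consecutive letters are compatible with the edge orientations, then starting from a seed of
   one or two embedded vertices the other vertices can be chosen greedily, one at a time and
   outwards from the seed, among the many typical candidates.
   If the path contains a directed 2-path, a single S- or T-letter placed there suffices.  An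
   antidirected path admits no such code; it is routed through a special edge, i.e. an edge
   from a typical S-vertex into A u T or from a typical T-vertex into B u S.  The semidegree
   condition yields two disjoint special edges, one for each path. *)

lemma card_filter_Un_disjoint:
  assumes "X \<inter> Y = {}" "finite X" "finite Y"
  shows "card {w \<in> X \<union> Y. P w} = card {w \<in> X. P w} + card {w \<in> Y. P w}"
proof -
  have "{w \<in> X \<union> Y. P w} = {w \<in> X. P w} \<union> {w \<in> Y. P w}" by blast
  moreover have "{w \<in> X. P w} \<inter> {w \<in> Y. P w} = {}" using assms(1) by blast
  ultimately show ?thesis using assms(2,3) by (simp add: card_Un_disjoint)
qed

lemma half_in_one_part:
  fixes d :: real
  assumes "X \<inter> Y = {}" "finite X" "finite Y" "d \<le> real (card {w \<in> X \<union> Y. P w})"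
  shows "d / 2 \<le> real (card {w \<in> X. P w}) \<or> d / 2 \<le> real (card {w \<in> Y. P w})"
  using card_filter_Un_disjoint[OF assms(1-3), of P] assms(4) by linarith

lemma card_split_by:
  assumes "finite Y"
  shows "card Y = card {w \<in> Y. P w} + card {w \<in> Y. \<not> P w}"
proof -
  have "card ({w \<in> Y. P w} \<union> {w \<in> Y. \<not> P w}) = card {w \<in> Y. P w} + card {w \<in> Y. \<not> P w}"
    using assms by (intro card_Un_disjoint) auto
  moreover have "{w \<in> Y. P w} \<union> {w \<in> Y. \<not> P w} = Y" by blast
  ultimately show ?thesis by simp
qed

lemma card_filter_subset_ge:
  assumes "finite X" "Y \<subseteq> X" "real (card X) - r \<le> real (card {w \<in> X. P w})"
  shows "real (card Y) - r \<le> real (card {w \<in> Y. P w})"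
proof -
  have "card {w \<in> Y. \<not> P w} \<le> card {w \<in> X. \<not> P w}"
    using assms(1,2) by (intro card_mono) auto
  then show ?thesis
    using assms card_split_by[of Y P] card_split_by[of X P] finite_subset[OF assms(2,1)] by linarith
qed

(* Removing Z loses at most |Z| elements; stated over the reals for linear arithmetic. *)
lemma card_Diff_ge_real:
  "finite Z \<Longrightarrow> real (card X) - real (card Z) \<le> real (card (X - Z))"
  using diff_card_le_card_Diff[of Z X] by linarith

lemma exists_avoiding:
  assumes "finite F" "card F < card {w \<in> Q. P w}"
  shows "\<exists>w \<in> Q. P w \<and> w \<notin> F"
proof (rule ccontr)
  assume "\<not> ?thesis"
  then have "{w \<in> Q. P w} \<subseteq> F" by blast
  then have "card {w \<in> Q. P w} \<le> card F" by (rule card_mono[OF assms(1)])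
  then show False using assms(2) by simp
qed

lemma extend_injective:
  assumes "inj_on f X" "finite X" "k \<notin> X" "card X < card {w \<in> Q. P w}"
  obtains w where "w \<in> Q" "P w" "inj_on (f(k := w)) (insert k X)"
proof -
  have "card (f ` X) < card {w \<in> Q. P w}"
    using card_image_le[OF assms(2), of f] assms(4) by linarith
  then have "\<exists>w \<in> Q. P w \<and> w \<notin> f ` X"
    using assms(2) by (intro exists_avoiding) simp_all
  then obtain w where w: "w \<in> Q" "P w" "w \<notin> f ` X" by blast
  have "inj_on (f(k := w)) X" by (rule inj_on_fun_updI[OF assms(1) w(3)])
  moreover have "(f(k := w)) ` X = f ` X" using assms(3) by (intro image_cong) auto
  ultimately show ?thesis using that w assms(3) by simp
qed

(* Greedy embedding: starting from an injective map on U0, the points of ord are embedded one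
   by one, each attached to a parent par k embedded earlier, as long as every point has more
   candidates (in Q k, related to the image of its parent by R k) than points in total. *)
lemma greedy_embedding:
  fixes ord :: "nat list" and U0 :: "nat set" and f0 :: "nat \<Rightarrow> 'a"
  assumes "distinct ord" "set ord \<inter> U0 = {}" "finite U0" "inj_on f0 U0"
    and "\<And>t. t < length ord \<Longrightarrow> par (ord ! t) \<in> U0 \<union> set (take t ord)"
    and "\<And>t u. t < length ord \<Longrightarrow>
           u \<in> (if par (ord ! t) \<in> U0 then {f0 (par (ord ! t))} else Q (par (ord ! t))) \<Longrightarrow>
           card U0 + length ord < card {w \<in> Q (ord ! t). R (ord ! t) u w}"
    and "\<And>k. k \<in> set ord \<Longrightarrow> Q k \<inter> f0 ` U0 = {}"
  shows "\<exists>f. (\<forall>k \<in> U0. f k = f0 k) \<and> (\<forall>k \<in> set ord. f k \<in> Q k \<and> R k (f (par k)) (f k))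
             \<and> inj_on f (U0 \<union> set ord)"
  using assms(1,2,5-)
proof (induction ord rule: rev_induct)
  case Nil
  then show ?case using assms(4) by auto
next
  case (snoc k xs)
  have fresh: "k \<notin> U0 \<union> set xs" using snoc.prems(1,2) by auto
  have "\<exists>f. (\<forall>j \<in> U0. f j = f0 j) \<and> (\<forall>j \<in> set xs. f j \<in> Q j \<and> R j (f (par j)) (f j))
            \<and> inj_on f (U0 \<union> set xs)"
  proof (rule snoc.IH)
    fix t u assume t: "t < length xs"
    then show "par (xs ! t) \<in> U0 \<union> set (take t xs)"
      using snoc.prems(3)[of t] by (simp add: nth_append)
    assume u: "u \<in> (if par (xs ! t) \<in> U0 then {f0 (par (xs ! t))} else Q (par (xs ! t)))"
    have "(xs @ [k]) ! t = xs ! t" using t by (simp add: nth_append)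
    from snoc.prems(4)[of t u, unfolded this]
    show "card U0 + length xs < card {w \<in> Q (xs ! t). R (xs ! t) u w}" using t u by simp
  qed (use snoc.prems in auto)
  then obtain f where f_U0: "\<forall>j \<in> U0. f j = f0 j"
    and f_xs: "\<forall>j \<in> set xs. f j \<in> Q j \<and> R j (f (par j)) (f j)"
    and f_inj: "inj_on f (U0 \<union> set xs)" by blast
  have par_k: "par k \<in> U0 \<union> set xs"
    using snoc.prems(3)[of "length xs"] by simp
  have par_xs: "par j \<noteq> k" if j: "j \<in> set xs" for j
  proof -
    obtain t where "t < length xs" "xs ! t = j" using j unfolding in_set_conv_nth by blast
    then have "par j \<in> U0 \<union> set (take t xs)" using snoc.prems(3)[of t] by (simp add: nth_append)
    then show ?thesis using fresh by (auto dest: in_set_takeD)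
  qed
  have "f (par k) \<in> (if par k \<in> U0 then {f0 (par k)} else Q (par k))"
    using par_k f_U0 f_xs by auto
  then have "card U0 + length xs < card {w \<in> Q k. R k (f (par k)) w}"
    using snoc.prems(4)[of "length xs" "f (par k)", unfolded nth_append_length] by simp
  moreover have "card (U0 \<union> set xs) \<le> card U0 + length xs"
    using card_Un_le[of U0 "set xs"] card_length[of xs] by linarith
  ultimately have more: "card (U0 \<union> set xs) < card {w \<in> Q k. R k (f (par k)) w}" by linarith
  obtain w where w: "w \<in> Q k" "R k (f (par k)) w"
    and inj: "inj_on (f(k := w)) (insert k (U0 \<union> set xs))"
    by (rule extend_injective[OF f_inj _ fresh more]) (simp add: assms(3))
  show ?case
  proof (intro exI conjI)
    show "\<forall>j \<in> U0. (f(k := w)) j = f0 j" using f_U0 fresh by auto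
    have "par k \<noteq> k" using par_k fresh by auto
    then show "\<forall>j \<in> set (xs @ [k]). (f(k := w)) j \<in> Q j \<and> R j ((f(k := w)) (par j)) ((f(k := w)) j)"
      using f_xs w par_xs fresh by auto
    show "inj_on (f(k := w)) (U0 \<union> set (xs @ [k]))" using inj by simp
  qed
qed

definition has_two_disjoint_edges :: "('a \<Rightarrow> 'a \<Rightarrow> bool) \<Rightarrow> bool" where
  "has_two_disjoint_edges R \<longleftrightarrow>
     (\<exists>x1 y1 x2 y2. R x1 y1 \<and> R x2 y2 \<and> x1 \<noteq> x2 \<and> x1 \<noteq> y2 \<and> y1 \<noteq> x2 \<and> y1 \<noteq> y2)"

lemma has_two_disjoint_edgesI:
  "R x1 y1 \<Longrightarrow> R x2 y2 \<Longrightarrow> x1 \<noteq> x2 \<Longrightarrow> x1 \<noteq> y2 \<Longrightarrow> y1 \<noteq> x2 \<Longrightarrow> y1 \<noteq> y2 \<Longrightarrow>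
   has_two_disjoint_edges R"
  unfolding has_two_disjoint_edges_def by blast

lemma has_two_disjoint_edges_mono:
  "has_two_disjoint_edges R \<Longrightarrow> (\<And>x y. R x y \<Longrightarrow> R' x y) \<Longrightarrow> has_two_disjoint_edges R'"
  unfolding has_two_disjoint_edges_def by blast

lemma two_disjoint_edges_one_side:
  assumes "s1 \<in> P" "s2 \<in> P" "s1 \<noteq> s2" "P \<inter> P' = {}" "finite P'"
    and two_out: "\<And>x. x \<in> P \<Longrightarrow> 1 < card {y \<in> P'. R x y}"
  shows "has_two_disjoint_edges (\<lambda>x y. R x y \<and> x \<in> P \<and> y \<in> P')"
proof -
  obtain y1 where y1: "y1 \<in> P'" "R s1 y1"
    using exists_avoiding[of "{}" P' "R s1"] two_out[OF assms(1)] by auto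
  obtain y2 where y2: "y2 \<in> P'" "R s2 y2" "y2 \<noteq> y1"
    using exists_avoiding[of "{y1}" P' "R s2"] two_out[OF assms(2)] by auto
  show ?thesis
    using assms(1-4) y1 y2 by (intro has_two_disjoint_edgesI[of _ s1 y1 s2 y2]) auto
qed

(* If every vertex of P has an R-neighbour in P' and every vertex of Q one in Q', where P lies in
   Q' and Q in P' (as S in B u S and T in A u T), then two disjoint such edges exist; the case
   analysis resolves the possible overlaps of the chosen edges. *)
lemma two_disjoint_edges_balanced:
  assumes disj: "P \<inter> P' = {}" "Q \<inter> Q' = {}" "P' \<inter> Q' = {}" and sub: "P \<subseteq> Q'" "Q \<subseteq> P'"
    and avoid: "\<And>z. \<exists>x \<in> P. x \<noteq> z" "\<And>z. \<exists>x \<in> Q. x \<noteq> z"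
    and out: "\<And>x. x \<in> P \<Longrightarrow> \<exists>y \<in> P'. R x y" "\<And>x. x \<in> Q \<Longrightarrow> \<exists>y \<in> Q'. R x y"
  shows "has_two_disjoint_edges (\<lambda>x y. R x y \<and> (x \<in> P \<and> y \<in> P' \<or> x \<in> Q \<and> y \<in> Q'))"
proof -
  have sep: "\<And>u v. u \<in> P \<Longrightarrow> v \<in> P' \<Longrightarrow> u \<noteq> v" "\<And>u v. u \<in> Q \<Longrightarrow> v \<in> Q' \<Longrightarrow> u \<noteq> v"
    "\<And>u v. u \<in> P' \<Longrightarrow> v \<in> Q' \<Longrightarrow> u \<noteq> v" "\<And>u v. u \<in> P \<Longrightarrow> v \<in> Q \<Longrightarrow> u \<noteq> v"
    using disj sub by blast+
  obtain t1 y2 where t1: "t1 \<in> Q" "y2 \<in> Q'" "R t1 y2" using avoid(2) out(2) by blast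
  obtain x1 y1 where x1: "x1 \<in> P" "x1 \<noteq> y2" "y1 \<in> P'" "R x1 y1" using avoid(1) out(1) by blast
  show ?thesis
  proof (cases "y1 = t1")
    case False
    then show ?thesis
      using t1 x1 sep sub
      by (intro has_two_disjoint_edgesI[of _ x1 y1 t1 y2]) blast+
  next
    case True
    obtain x2 y2' where x2: "x2 \<in> Q" "x2 \<noteq> t1" "y2' \<in> Q'" "R x2 y2'" using avoid(2) out(2) by blast
    show ?thesis
    proof (cases "y2' = x1")
      case False
      then show ?thesis
        using t1 x1 x2 \<open>y1 = t1\<close> sep sub
        by (intro has_two_disjoint_edgesI[of _ x1 t1 x2 y2']) blast+
    next
      case True
      obtain x1' y1' where x1': "x1' \<in> P" "x1' \<noteq> x1" "y1' \<in> P'" "R x1' y1'"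
        using avoid(1) out(1) by blast
      show ?thesis
      proof (cases "y1' = x2")
        case False
        then show ?thesis
          using x1 x2 x1' \<open>y2' = x1\<close> sep sub
          by (intro has_two_disjoint_edgesI[of _ x2 x1 x1' y1']) blast+
      next
        case True
        then show ?thesis
          using t1 x1 x2 x1' \<open>y1 = t1\<close> sep sub
          by (intro has_two_disjoint_edgesI[of _ x1 t1 x1' x2]) blast+
      qed
    qed
  qed
qed

datatype part = PA | PB | PS | PT

(* The parts that almost all out-neighbours (resp. in-neighbours) of a typical vertex cover. *)
fun out_parts :: "part \<Rightarrow> part set" where
  "out_parts PA = {PB}" | "out_parts PB = {PA}" | "out_parts PS = {PB, PS}" | "out_parts PT = {PA, PT}"

fun in_parts :: "part \<Rightarrow> part set" where
  "in_parts PA = {PB}" | "in_parts PB = {PA}" | "in_parts PS = {PA, PS}" | "in_parts PT = {PB, PT}"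

definition side :: "bool \<Rightarrow> part" where
  "side b = (if b then PB else PA)"

definition is_AB :: "part \<Rightarrow> bool" where
  "is_AB p \<longleftrightarrow> p = PA \<or> p = PB"

fun alternating :: "'b list \<Rightarrow> bool" where
  "alternating (x # y # zs) \<longleftrightarrow> x \<noteq> y \<and> alternating (y # zs)"
| "alternating _ \<longleftrightarrow> True"

lemma alternating_nth:
  "alternating xs \<Longrightarrow> Suc j < length xs \<Longrightarrow> xs ! j \<noteq> xs ! Suc j"
proof (induction xs arbitrary: j rule: alternating.induct)
  case (1 x y zs)
  then show ?case by (cases j) auto
qed auto

(* A code (the part of each of the 9 path vertices) forcing any embedding respecting it to be a
   useful path from side sw to the other side. *)
definition useful_code :: "bool \<Rightarrow> part list \<Rightarrow> bool" where
  "useful_code sw c \<longleftrightarrow> length c = 9 \<and> c ! 0 = side sw \<and> c ! 8 = side (\<not> sw) \<and>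
     alternating (filter is_AB c) \<and> odd (length (filter (\<lambda>p. \<not> is_AB p) c))"

(* Embedding grows outwards from a seed interval {lo..hi}: vertex k outside it is attached to its
   neighbour toward_seed hi k, and edge_outward tells whether the edge is directed away from it. *)
definition toward_seed :: "nat \<Rightarrow> nat \<Rightarrow> nat" where
  "toward_seed hi k = (if hi < k then k - 1 else Suc k)"

definition edge_outward :: "bool list \<Rightarrow> nat \<Rightarrow> nat \<Rightarrow> bool" where
  "edge_outward L hi k = (if hi < k then L ! (k - 1) else \<not> L ! k)"

(* Compatibility of a code with the orientations: each new vertex lies in a part covered by the
   typical out- or in-neighbourhood of its parent; a parent that is the (non-typical) hub vertex
   of the seed only offers in-neighbours, which must lie in the part q. *)
definition code_fits :: "bool list \<Rightarrow> part list \<Rightarrow> nat \<Rightarrow> nat \<Rightarrow> nat option \<Rightarrow> part \<Rightarrow> bool" where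
  "code_fits L c lo hi hub q \<longleftrightarrow> (\<forall>k<9. k < lo \<or> hi < k \<longrightarrow>
     (if hub = Some (toward_seed hi k) then \<not> edge_outward L hi k \<and> c ! k = q
      else if edge_outward L hi k then c ! k \<in> out_parts (c ! toward_seed hi k)
      else c ! k \<in> in_parts (c ! toward_seed hi k)))"

(* Unfolds bounded quantifiers over path positions, so that codes are checked by evaluation. *)
lemma all_less_9: "(\<forall>k<9::nat. P k) \<longleftrightarrow> P 0 \<and> P 1 \<and> P 2 \<and> P 3 \<and> P 4 \<and> P 5 \<and> P 6 \<and> P 7 \<and> P 8"
  by (simp add: eval_nat_numeral All_less_Suc2)

definition outward_order :: "nat \<Rightarrow> nat \<Rightarrow> nat list" where
  "outward_order lo hi = [Suc hi..<9] @ rev [0..<lo]"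

lemma set_outward_order: "set (outward_order lo hi) = {Suc hi..<9} \<union> {0..<lo}"
  by (auto simp: outward_order_def)

lemma length_outward_order: "hi \<le> 8 \<Longrightarrow> length (outward_order lo hi) = (8 - hi) + lo"
  by (simp add: outward_order_def)

lemma outward_order_parent:
  assumes "lo \<le> hi" "hi \<le> 8" "t < length (outward_order lo hi)"
  shows "toward_seed hi (outward_order lo hi ! t) \<in> {lo..hi} \<union> set (take t (outward_order lo hi))"
proof -
  let ?ord = "outward_order lo hi"
  have "toward_seed hi (?ord ! t) \<in> {lo, hi} \<or> (0 < t \<and> toward_seed hi (?ord ! t) = ?ord ! (t - 1))"
  proof (cases "t < 8 - hi")
    case True
    then have "?ord ! t = Suc hi + t" "0 < t \<Longrightarrow> ?ord ! (t - 1) = hi + t"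
      by (auto simp: outward_order_def nth_append)
    then show ?thesis by (cases t) (auto simp: toward_seed_def)
  next
    case False
    define t' where "t' = t - (8 - hi)"
    have t': "t' < lo" "t = (8 - hi) + t'"
      using assms False length_outward_order[of hi lo] unfolding t'_def by auto
    then have "?ord ! t = lo - Suc t'" "0 < t' \<Longrightarrow> ?ord ! (t - 1) = lo - t'"
      using assms by (auto simp: outward_order_def nth_append rev_nth)
    then show ?thesis using t' assms(1) by (cases t') (auto simp: toward_seed_def)
  qed
  moreover have "0 < t \<Longrightarrow> ?ord ! (t - 1) \<in> set (take t ?ord)"
    using assms(3) by (auto simp: in_set_conv_nth intro!: exI[of _ "t - 1"])
  ultimately show ?thesis using assms(1) by auto
qed

lemma outward_edges:
  assumes "length L = 8" "lo \<le> hi" "hi \<le> Suc lo"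
    and outward: "\<And>k. k \<in> set (outward_order lo hi) \<Longrightarrow>
      (if edge_outward L hi k then E (f (toward_seed hi k)) (f k) else E (f k) (f (toward_seed hi k)))"
    and seed: "lo < hi \<Longrightarrow> (if L ! lo then E (f lo) (f hi) else E (f hi) (f lo))"
  shows "\<forall>i < length L. if L ! i then E (f i) (f (Suc i)) else E (f (Suc i)) (f i)"
proof (intro allI impI)
  fix i assume i: "i < length L"
  consider "hi \<le> i" | "i < lo" | "i = lo" "hi = Suc lo" using assms(2,3) by linarith
  then show "if L ! i then E (f i) (f (Suc i)) else E (f (Suc i)) (f i)"
  proof cases
    case 1
    then have eq: "toward_seed hi (Suc i) = i" "edge_outward L hi (Suc i) = L ! i"
      by (auto simp: toward_seed_def edge_outward_def)
    have "Suc i \<in> set (outward_order lo hi)" using 1 i assms(1) by (simp add: set_outward_order)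
    from outward[OF this] show ?thesis unfolding eq .
  next
    case 2
    then have eq: "toward_seed hi i = Suc i" "edge_outward L hi i = (\<not> L ! i)"
      using assms(2) by (auto simp: toward_seed_def edge_outward_def)
    have "i \<in> set (outward_order lo hi)" using 2 by (simp add: set_outward_order)
    from outward[OF this] show ?thesis unfolding eq by (cases "L ! i") simp_all
  next
    case 3
    then show ?thesis using seed by (cases "L ! lo") auto
  qed
qed

(* If the edges at position i have equal direction (a directed 2-path through vertex i), the code
   alternates A and B and puts a single S or T at i. *)
definition directed_code :: "nat \<Rightarrow> bool \<Rightarrow> bool \<Rightarrow> part list" where
  "directed_code i b sw = map (\<lambda>j.
     if j < i then side (sw = even j)
     else if j = i then (if (side (sw = even (i - 1)) = PA) = b then PS else PT)
     else side (sw = odd j)) [0..<9]"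

lemma directed_code_ok:
  assumes "1 \<le> i" "i \<le> 7" "L ! (i - 1) = b" "L ! i = b"
  shows "useful_code sw (directed_code i b sw) \<and> code_fits L (directed_code i b sw) i i None PA"
proof -
  have "i \<in> {1, 2, 3, 4, 5, 6, 7}" using assms(1,2) by auto
  then show ?thesis using assms(3,4)
    by (elim insertE emptyE; cases b; cases sw;
        simp add: directed_code_def useful_code_def code_fits_def all_less_9 side_def is_AB_def
          toward_seed_def edge_outward_def upt_rec)
qed

definition antidirected :: "bool \<Rightarrow> bool list" where
  "antidirected b = [b, \<not> b, b, \<not> b, b, \<not> b, b, \<not> b]"

lemma antidirected_if_no_directed_step:
  assumes "length L = 8" and no_step: "\<forall>i. 1 \<le> i \<and> i \<le> 7 \<longrightarrow> L ! (i - 1) \<noteq> L ! i"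
  shows "L = antidirected (L ! 0)"
proof -
  obtain a0 a1 a2 a3 a4 a5 a6 a7 where L: "L = [a0, a1, a2, a3, a4, a5, a6, a7]"
    using assms(1) by (auto simp: length_Suc_conv numeral_eq_Suc)
  show ?thesis
    using no_step[rule_format, of 1] no_step[rule_format, of 2] no_step[rule_format, of 3]
      no_step[rule_format, of 4] no_step[rule_format, of 5] no_step[rule_format, of 6]
      no_step[rule_format, of 7]
    unfolding L antidirected_def by auto
qed

(* Types (p, q, h) of special edges xy: x typical in p, y in q, and y has many in-neighbours in h. *)
definition special_configs :: "(part \<times> part \<times> part) set" where
  "special_configs = {(PS, PA, PB), (PT, PB, PA), (PS, PT, PB), (PS, PT, PT), (PT, PS, PA), (PT, PS, PS)}"

(* A useful code for L routing the path through a special edge of type (p, q, h) at the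
   consecutive positions ix, iy, with iy the hub. *)
definition code_through_edge ::
  "bool list \<Rightarrow> bool \<Rightarrow> part \<Rightarrow> part \<Rightarrow> part \<Rightarrow> part list \<Rightarrow> nat \<Rightarrow> nat \<Rightarrow> bool" where
  "code_through_edge L sw p q h c ix iy \<longleftrightarrow> useful_code sw c \<and> c ! ix = p \<and> c ! iy = q \<and>
     (ix = Suc iy \<or> iy = Suc ix) \<and> ix \<le> 8 \<and> iy \<le> 8 \<and> L ! min ix iy = (ix < iy) \<and>
     code_fits L c (min ix iy) (max ix iy) (Some iy) h"

(* Swapping A with B and S with T is a symmetry of out_parts and in_parts. *)
fun swap_sides :: "part \<Rightarrow> part" where
  "swap_sides PA = PB" | "swap_sides PB = PA" | "swap_sides PS = PT" | "swap_sides PT = PS"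

definition antidirected_codes_from_A :: "((bool \<times> part \<times> part \<times> part) \<times> part list \<times> nat \<times> nat) list" where
  "antidirected_codes_from_A =
    [((True,  PS, PA, PB), [PA, PB, PA, PB, PA, PB, PS, PA, PB], 6, 7),
     ((True,  PT, PB, PA), [PA, PB, PA, PB, PA, PB, PT, PA, PB], 6, 5),
     ((True,  PS, PT, PB), [PA, PB, PA, PB, PA, PS, PS, PT, PB], 6, 7),
     ((True,  PS, PT, PT), [PA, PB, PA, PB, PS, PT, PT, PA, PB], 4, 5),
     ((True,  PT, PS, PA), [PA, PB, PA, PB, PA, PS, PT, PT, PB], 6, 5),
     ((True,  PT, PS, PS), [PA, PB, PA, PB, PS, PS, PT, PA, PB], 6, 5),
     ((False, PS, PA, PB), [PA, PB, PA, PB, PA, PB, PA, PS, PB], 7, 6),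
     ((False, PT, PB, PA), [PA, PB, PA, PB, PA, PB, PA, PT, PB], 7, 8),
     ((False, PS, PT, PB), [PA, PB, PA, PB, PT, PS, PS, PA, PB], 5, 4),
     ((False, PS, PT, PT), [PA, PB, PA, PB, PA, PT, PT, PS, PB], 7, 6),
     ((False, PT, PS, PA), [PA, PB, PA, PB, PT, PT, PS, PA, PB], 5, 6),
     ((False, PT, PS, PS), [PA, PB, PA, PB, PA, PT, PS, PS, PB], 5, 6)]"

(* Codes starting in B are obtained from those starting in A by the symmetry swap_sides. *)
definition antidirected_code :: "bool \<Rightarrow> bool \<Rightarrow> part \<Rightarrow> part \<Rightarrow> part \<Rightarrow> part list \<times> nat \<times> nat" where
  "antidirected_code ob sw p q h =
     (if sw then
        (case the (map_of antidirected_codes_from_A (ob, swap_sides p, swap_sides q, swap_sides h)) of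
           (c, ix, iy) \<Rightarrow> (map swap_sides c, ix, iy))
      else the (map_of antidirected_codes_from_A (ob, p, q, h)))"

lemma antidirected_code_ok:
  assumes "(p, q, h) \<in> special_configs"
  shows "case antidirected_code ob sw p q h of
           (c, ix, iy) \<Rightarrow> code_through_edge (antidirected ob) sw p q h c ix iy"
  using assms unfolding special_configs_def
  by (elim insertE emptyE; cases ob; cases sw;
      simp add: antidirected_code_def antidirected_codes_from_A_def code_through_edge_def
        useful_code_def code_fits_def all_less_9 side_def is_AB_def toward_seed_def edge_outward_def
        antidirected_def)

(* The quantitative content of the ABST-conditions with absolute parameters: parts of size at
   least d, in-degree at least d into the expected parts, at most m atypical vertices (missing
   more than r expected neighbours) per part, and r + 23 < d/2 - m. *)
locale ABST_partition =
  fixes V :: "'a set" and E :: "'a \<Rightarrow> 'a \<Rightarrow> bool" and A B S T :: "'a set"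
    and n :: nat and r m d :: real
  assumes digraph: "digraph V E" and card_V: "card V = n"
    and semidegree: "min_semideg_ge V E (real n / 2)"
    and disjoint: "A \<inter> B = {}" "A \<inter> S = {}" "A \<inter> T = {}" "B \<inter> S = {}" "B \<inter> T = {}" "S \<inter> T = {}"
    and partition: "A \<union> B \<union> S \<union> T = V"
    and large: "d \<le> real (card A)" "d \<le> real (card B)" "d \<le> real (card S)" "d \<le> real (card T)"
    and in_degree: "\<forall>x\<in>A. d \<le> real (indeg_in E B x)" "\<forall>x\<in>B. d \<le> real (indeg_in E A x)"
      "\<forall>x\<in>S. d \<le> real (indeg_in E (A \<union> S) x)" "\<forall>x\<in>T. d \<le> real (indeg_in E (B \<union> T) x)"
    and few_atypical_A: "real (card {x\<in>A. \<not> (real (outdeg_in E B x) \<ge> real (card B) - r \<and>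
        real (indeg_in E B x) \<ge> real (card B) - r)}) \<le> m"
    and few_atypical_B: "real (card {x\<in>B. \<not> (real (outdeg_in E A x) \<ge> real (card A) - r \<and>
        real (indeg_in E A x) \<ge> real (card A) - r)}) \<le> m"
    and few_atypical_S: "real (card {x\<in>S. \<not> (real (outdeg_in E (B \<union> S) x) \<ge> real (card B) + real (card S) - r \<and>
        real (indeg_in E (A \<union> S) x) \<ge> real (card A) + real (card S) - r)}) \<le> m"
    and few_atypical_T: "real (card {x\<in>T. \<not> (real (outdeg_in E (A \<union> T) x) \<ge> real (card A) + real (card T) - r \<and>
        real (indeg_in E (B \<union> T) x) \<ge> real (card B) + real (card T) - r)}) \<le> m"
    and slack: "0 \<le> r" "r + 23 < d / 2 - m"
begin

primrec block :: "part \<Rightarrow> 'a set" where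
  "block PA = A" | "block PB = B" | "block PS = S" | "block PT = T"

definition out_range :: "part \<Rightarrow> 'a set" where
  "out_range p = \<Union> (block ` out_parts p)"

definition in_range :: "part \<Rightarrow> 'a set" where
  "in_range p = \<Union> (block ` in_parts p)"

definition typical :: "part \<Rightarrow> 'a set" where
  "typical p = {x \<in> block p.
     real (card (out_range p)) - r \<le> real (outdeg_in E (out_range p) x) \<and>
     real (card (in_range p)) - r \<le> real (indeg_in E (in_range p) x)}"

lemma finite_V: "finite V"
  using digraph by (simp add: digraph_def)

lemma edge_in_V: "E x y \<Longrightarrow> x \<in> V \<and> y \<in> V \<and> x \<noteq> y"
  using digraph by (simp add: digraph_def)

lemma block_subset_V: "block p \<subseteq> V"
  using partition by (cases p) auto

lemma finite_block: "finite (block p)"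
  using finite_subset[OF block_subset_V finite_V] .

lemma finite_parts: "finite A" "finite B" "finite S" "finite T"
  using finite_block[of PA] finite_block[of PB] finite_block[of PS] finite_block[of PT] by simp_all

lemma finite_ranges: "finite (out_range p)" "finite (in_range p)"
  using finite_parts by (cases p; simp add: out_range_def in_range_def)+

lemma large_block: "d \<le> real (card (block p))"
  using large by (cases p) simp_all

lemma typical_subset: "typical p \<subseteq> block p"
  by (auto simp: typical_def)

lemma few_atypical: "real (card (block p - typical p)) \<le> m"
proof -
  have split: "block p - typical p = {x \<in> block p.
      \<not> (real (card (out_range p)) - r \<le> real (outdeg_in E (out_range p) x) \<and>
         real (card (in_range p)) - r \<le> real (indeg_in E (in_range p) x))}"
    by (auto simp: typical_def)
  have cards: "card (B \<union> S) = card B + card S" "card (A \<union> S) = card A + card S"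
    "card (A \<union> T) = card A + card T" "card (B \<union> T) = card B + card T"
    using disjoint finite_parts by (simp_all add: card_Un_disjoint)
  show ?thesis unfolding split
    using few_atypical_A few_atypical_B few_atypical_S few_atypical_T cards
    by (cases p) (simp_all add: out_range_def in_range_def insert_commute Un_commute)
qed

lemma m_nonneg: "0 \<le> m"
  using few_atypical[of PA] by linarith

lemma avoid_typical:
  assumes "finite F" "card F \<le> 14"
  shows "\<exists>v \<in> typical p. v \<notin> F"
proof -
  have "real (card (block p)) - real (card (block p - typical p)) \<le> real (card (typical p))"
    using card_Diff_subset[OF _ typical_subset, of p] finite_block[of p]
      card_mono[OF finite_block typical_subset, of p] by (simp add: finite_subset[OF typical_subset])
  then have "card F < card {v \<in> typical p. True}"
    using large_block[of p] few_atypical[of p] slack assms(2) m_nonneg by simp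
  then show ?thesis using exists_avoiding[OF assms(1), of "typical p" "\<lambda>_. True"] by simp
qed

lemma typical_out_neighbours:
  assumes "v \<in> typical p" "p' \<in> out_parts p"
  shows "real (card (block p')) - r \<le> real (card {w \<in> block p'. E v w})"
proof (rule card_filter_subset_ge)
  show "finite (out_range p)" "block p' \<subseteq> out_range p"
    using assms(2) finite_ranges by (auto simp: out_range_def)
  show "real (card (out_range p)) - r \<le> real (card {w \<in> out_range p. E v w})"
    using assms(1) by (simp add: typical_def outdeg_in_def)
qed

lemma typical_in_neighbours:
  assumes "v \<in> typical p" "p' \<in> in_parts p"
  shows "real (card (block p')) - r \<le> real (card {w \<in> block p'. E w v})"
proof (rule card_filter_subset_ge)
  show "finite (in_range p)" "block p' \<subseteq> in_range p"
    using assms(2) finite_ranges by (auto simp: in_range_def)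
  show "real (card (in_range p)) - r \<le> real (card {w \<in> in_range p. E w v})"
    using assms(1) by (simp add: typical_def indeg_in_def)
qed

lemma typical_candidates:
  assumes "finite F" "N \<le> real (card {w \<in> block p. P w})"
  shows "N - m - real (card F) \<le> real (card {w \<in> typical p - F. P w})"
proof -
  define Z where "Z = (block p - typical p) \<union> F"
  have "card Z \<le> card (block p - typical p) + card F"
    unfolding Z_def by (rule card_Un_le)
  then have "real (card Z) \<le> m + real (card F)" using few_atypical[of p] by linarith
  moreover have "{w \<in> block p. P w} - Z \<subseteq> {w \<in> typical p - F. P w}"
    unfolding Z_def by blast
  then have "card ({w \<in> block p. P w} - Z) \<le> card {w \<in> typical p - F. P w}"
    using finite_block[of p] typical_subset[of p] by (intro card_mono) (auto intro: finite_subset)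
  moreover have "finite Z" unfolding Z_def using assms(1) finite_block[of p] by simp
  then have "real (card {w \<in> block p. P w}) - real (card Z) \<le> real (card ({w \<in> block p. P w} - Z))"
    by (rule card_Diff_ge_real)
  ultimately show ?thesis using assms(2) by linarith
qed

(* A vertex whose parent is embedded at a typical or hub vertex has more than 9 fresh typical
   candidates, enough for the greedy embedding of the 9 path vertices. *)
lemma many_candidates:
  assumes k: "k < 9" "k < lo \<or> hi < k" and fits: "code_fits L c lo hi hub q"
    and parent: "u \<in> typical (c ! toward_seed hi k) \<and> hub \<noteq> Some (toward_seed hi k) \<or>
      hub = Some (toward_seed hi k) \<and> d / 2 \<le> real (card {w \<in> block q. E w u})"
    and F: "finite F" "card F \<le> 14"
  shows "9 < card {w \<in> typical (c ! k) - F. if edge_outward L hi k then E u w else E w u}"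
proof -
  let ?p = "toward_seed hi k" and ?out = "edge_outward L hi k"
  have fit_k: "if hub = Some ?p then \<not> ?out \<and> c ! k = q
      else if ?out then c ! k \<in> out_parts (c ! ?p) else c ! k \<in> in_parts (c ! ?p)"
    using fits k unfolding code_fits_def by blast
  have "real 9 < real (card {w \<in> typical (c ! k) - F. if ?out then E u w else E w u})"
  proof (cases "hub = Some ?p")
    case True
    then have "d / 2 \<le> real (card {w \<in> block (c ! k). if ?out then E u w else E w u})"
      using parent fit_k by auto
    from typical_candidates[OF F(1) this] show ?thesis using F(2) slack by linarith
  next
    case False
    have "real (card (block (c ! k))) - r \<le> real (card {w \<in> block (c ! k). if ?out then E u w else E w u})"
      using parent fit_k False typical_out_neighbours typical_in_neighbours by (cases ?out) auto
    then have "d - r \<le> real (card {w \<in> block (c ! k). if ?out then E u w else E w u})"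
      using large_block[of "c ! k"] by linarith
    from typical_candidates[OF F(1) this] show ?thesis using F(2) slack m_nonneg by linarith
  qed
  then show ?thesis by linarith
qed

lemma outward_extension:
  assumes seed: "lo \<le> hi" "hi \<le> 8"
    and g_inj: "inj_on g {lo..hi}"
    and g_in: "\<And>j. j \<in> {lo..hi} \<Longrightarrow> g j \<in> F \<and> g j \<in> block (c ! j)"
    and g_typical: "\<And>j. j \<in> {lo..hi} \<Longrightarrow> hub \<noteq> Some j \<Longrightarrow> g j \<in> typical (c ! j)"
    and hub: "\<And>j. hub = Some j \<Longrightarrow> j \<in> {lo..hi} \<and> d / 2 \<le> real (card {w \<in> block q. E w (g j)})"
    and fits: "code_fits L c lo hi hub q" and F: "finite F" "card F \<le> 14"
  shows "\<exists>f. (\<forall>j \<in> {lo..hi}. f j = g j) \<and> inj_on f {0..8} \<and>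
    (\<forall>k \<in> set (outward_order lo hi). f k \<in> typical (c ! k) - F \<and>
       (if edge_outward L hi k then E (f (toward_seed hi k)) (f k) else E (f k) (f (toward_seed hi k))))"
proof -
  define ord where "ord = outward_order lo hi"
  define Q where "Q k = typical (c ! k) - F" for k
  define R where "R k u w = (if edge_outward L hi k then E u w else E w u)" for k u w
  have ord_set: "set ord = {Suc hi..<9} \<union> {0..<lo}"
    unfolding ord_def by (rule set_outward_order)
  have total: "card {lo..hi} + length ord = 9"
    using seed by (simp add: ord_def length_outward_order)
  have "\<exists>f. (\<forall>k \<in> {lo..hi}. f k = g k) \<and>
      (\<forall>k \<in> set ord. f k \<in> Q k \<and> R k (f (toward_seed hi k)) (f k)) \<and> inj_on f ({lo..hi} \<union> set ord)"
  proof (rule greedy_embedding[OF _ _ _ g_inj])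
    show "distinct ord" "set ord \<inter> {lo..hi} = {}" "finite {lo..hi}"
      using seed(1) by (auto simp: ord_def outward_order_def)
    show "toward_seed hi (ord ! t) \<in> {lo..hi} \<union> set (take t ord)" if "t < length ord" for t
      using outward_order_parent[OF seed] that unfolding ord_def by blast
    show "Q k \<inter> g ` {lo..hi} = {}" if "k \<in> set ord" for k
      using g_in by (auto simp: Q_def)
    fix t u
    assume t: "t < length ord"
      and u: "u \<in> (if toward_seed hi (ord ! t) \<in> {lo..hi} then {g (toward_seed hi (ord ! t))}
                   else Q (toward_seed hi (ord ! t)))"
    let ?k = "ord ! t"
    let ?p = "toward_seed hi ?k"
    have k: "?k < 9" "?k < lo \<or> hi < ?k" using nth_mem[OF t] ord_set seed by auto
    have "u \<in> typical (c ! ?p) \<and> hub \<noteq> Some ?p \<or>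
        hub = Some ?p \<and> d / 2 \<le> real (card {w \<in> block q. E w u})"
      using u g_typical hub by (cases "?p \<in> {lo..hi}") (auto simp: Q_def)
    from many_candidates[OF k fits this F]
    show "card {lo..hi} + length ord < card {w \<in> Q ?k. R ?k u w}"
      unfolding total by (simp add: Q_def R_def)
  qed
  then obtain f where "\<forall>k \<in> {lo..hi}. f k = g k" "inj_on f ({lo..hi} \<union> set ord)"
    "\<forall>k \<in> set ord. f k \<in> Q k \<and> R k (f (toward_seed hi k)) (f k)" by blast
  moreover have "{lo..hi} \<union> set ord = {0..8}"
    using seed unfolding ord_set by auto
  ultimately show ?thesis
    by (intro exI[of _ f] conjI) (simp_all add: ord_def Q_def R_def)
qed

lemma embed_along_code:
  assumes L: "length L = 8" and seed: "lo \<le> hi" "hi \<le> Suc lo" "hi \<le> 8"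
    and g_inj: "inj_on g {lo..hi}"
    and g_in: "\<And>j. j \<in> {lo..hi} \<Longrightarrow> g j \<in> F \<and> g j \<in> block (c ! j)"
    and g_typical: "\<And>j. j \<in> {lo..hi} \<Longrightarrow> hub \<noteq> Some j \<Longrightarrow> g j \<in> typical (c ! j)"
    and hub: "\<And>j. hub = Some j \<Longrightarrow> j \<in> {lo..hi} \<and> d / 2 \<le> real (card {w \<in> block q. E w (g j)})"
    and seed_edge: "lo < hi \<Longrightarrow> (if L ! lo then E (g lo) (g hi) else E (g hi) (g lo))"
    and fits: "code_fits L c lo hi hub q" and F: "finite F" "card F \<le> 14"
  shows "\<exists>f. is_copy V E L f \<and> (\<forall>j\<le>8. f j \<in> block (c ! j)) \<and>
    (\<forall>j\<le>8. j < lo \<or> hi < j \<longrightarrow> f j \<notin> F) \<and> (\<forall>j \<in> {lo..hi}. f j = g j)"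
proof -
  obtain f where f_seed: "\<forall>j \<in> {lo..hi}. f j = g j" and f_inj: "inj_on f {0..8}"
    and f_out: "\<forall>k \<in> set (outward_order lo hi). f k \<in> typical (c ! k) - F \<and>
       (if edge_outward L hi k then E (f (toward_seed hi k)) (f k) else E (f k) (f (toward_seed hi k)))"
    using outward_extension[OF seed(1,3) g_inj g_in g_typical hub fits F] by blast
  have cover: "j \<in> {lo..hi} \<or> j \<in> set (outward_order lo hi)" if "j \<le> 8" for j
    using that by (auto simp: set_outward_order)
  have f_block: "\<forall>j\<le>8. f j \<in> block (c ! j)"
  proof (intro allI impI)
    fix j :: nat assume "j \<le> 8"
    then consider "j \<in> {lo..hi}" | "j \<in> set (outward_order lo hi)" using cover by blast
    then show "f j \<in> block (c ! j)"
      by cases (use f_seed g_in f_out typical_subset in force)+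
  qed
  have "is_copy V E L f"
    unfolding is_copy_def
  proof (intro conjI)
    show "inj_on f {0..length L}" using f_inj L by simp
    show "f ` {0..length L} \<subseteq> V" using f_block block_subset_V L by fastforce
    show "\<forall>i < length L. if L ! i then E (f i) (f (Suc i)) else E (f (Suc i)) (f i)"
    proof (rule outward_edges[OF L seed(1,2)])
      show "\<And>k. k \<in> set (outward_order lo hi) \<Longrightarrow>
          (if edge_outward L hi k then E (f (toward_seed hi k)) (f k) else E (f k) (f (toward_seed hi k)))"
        using f_out by blast
      show "lo < hi \<Longrightarrow> (if L ! lo then E (f lo) (f hi) else E (f hi) (f lo))"
        using seed_edge f_seed seed(1) by simp
    qed
  qed
  moreover have "\<forall>j\<le>8. j < lo \<or> hi < j \<longrightarrow> f j \<notin> F"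
    using f_out by (auto simp: set_outward_order)
  ultimately show ?thesis using f_block f_seed by blast
qed

definition useful_copy :: "bool list \<Rightarrow> bool \<Rightarrow> (nat \<Rightarrow> 'a) \<Rightarrow> bool" where
  "useful_copy L sw f \<longleftrightarrow> is_copy V E L f \<and> useful_path A B S T (path_verts L f) \<and>
     is_XY_path (block (side sw)) (block (side (\<not> sw))) (path_verts L f)"

lemma block_membership:
  assumes "x \<in> block p"
  shows "(x \<in> A \<longleftrightarrow> p = PA) \<and> (x \<in> B \<longleftrightarrow> p = PB) \<and> (x \<in> S \<union> T \<longleftrightarrow> \<not> is_AB p)"
  using assms disjoint by (cases p) (auto simp: is_AB_def)

lemma code_membership:
  assumes "\<forall>j\<le>8. f j \<in> block (c ! j)" "j < 9"
  shows "(f j \<in> A \<longleftrightarrow> c ! j = PA) \<and> (f j \<in> B \<longleftrightarrow> c ! j = PB) \<and> (f j \<in> S \<union> T \<longleftrightarrow> \<not> is_AB (c ! j))"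
  using assms block_membership by simp

lemma code_as_map: "length c = 9 \<Longrightarrow> c = map ((!) c) [0..<9]"
  using map_nth[of c] by simp

lemma no_repeats_if_code:
  assumes c: "length c = 9" "alternating (filter is_AB c)" and f: "\<forall>j\<le>8. f j \<in> block (c ! j)"
  shows "no_repeats A B (map f [0..<9])"
proof -
  define js where "js = filter (\<lambda>j. is_AB (c ! j)) [0..<9]"
  have js: "j < 9 \<and> is_AB (c ! j)" if "j \<in> set js" for j
    using that by (simp add: js_def)
  have "filter (\<lambda>x. x \<in> A \<union> B) (map f [0..<9]) = map f (filter (\<lambda>j. f j \<in> A \<union> B) [0..<9])"
    by (simp add: filter_map o_def)
  also have "filter (\<lambda>j. f j \<in> A \<union> B) [0..<9] = js"
    unfolding js_def using code_membership[OF f] by (intro filter_cong) (auto simp: is_AB_def)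
  finally have AB_vertices: "filter (\<lambda>x. x \<in> A \<union> B) (map f [0..<9]) = map f js" .
  have "filter is_AB c = map ((!) c) js"
    unfolding js_def by (subst code_as_map[OF c(1)]) (simp add: filter_map o_def)
  then have alt: "alternating (map ((!) c) js)" using c(2) by simp
  show ?thesis unfolding no_repeats_def Let_def AB_vertices
  proof (intro allI impI)
    fix j assume j: "Suc j < length (map f js)"
    then have "c ! (js ! j) \<noteq> c ! (js ! Suc j)" using alternating_nth[OF alt, of j] by simp
    moreover have "js ! j \<in> set js" "js ! Suc j \<in> set js" using j by simp_all
    ultimately show "\<not> (map f js ! j \<in> A \<and> map f js ! Suc j \<in> A) \<and>
        \<not> (map f js ! j \<in> B \<and> map f js ! Suc j \<in> B)"
      using j js code_membership[OF f] by (auto simp: is_AB_def)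
  qed
qed

lemma count_ST_if_code:
  assumes "length c = 9" "\<forall>j\<le>8. f j \<in> block (c ! j)"
  shows "length (filter (\<lambda>x. x \<in> S \<union> T) (map f [0..<9])) = length (filter (\<lambda>p. \<not> is_AB p) c)"
proof -
  have "filter (\<lambda>j. f j \<in> S \<union> T) [0..<9] = filter (\<lambda>j. \<not> is_AB (c ! j)) [0..<9]"
    using code_membership[OF assms(2)] by (intro filter_cong) auto
  moreover have "filter (\<lambda>p. \<not> is_AB p) c = map ((!) c) (filter (\<lambda>j. \<not> is_AB (c ! j)) [0..<9])"
    by (subst code_as_map[OF assms(1)]) (simp add: filter_map o_def)
  ultimately show ?thesis by (simp add: filter_map o_def)
qed

lemma useful_copy_if_code:
  assumes L: "length L = 8" and copy: "is_copy V E L f" and code: "useful_code sw c"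
    and f: "\<forall>j\<le>8. f j \<in> block (c ! j)"
  shows "useful_copy L sw f"
proof -
  have verts: "path_verts L f = map f [0..<9]" using L by (simp add: path_verts_def)
  have c: "length c = 9" "c ! 0 = side sw" "c ! 8 = side (\<not> sw)" "alternating (filter is_AB c)"
    "odd (length (filter (\<lambda>p. \<not> is_AB p) c))" using code by (simp_all add: useful_code_def)
  have ends: "hd (path_verts L f) = f 0" "last (path_verts L f) = f 8"
    unfolding verts by (simp_all add: upt_rec numeral_eq_Suc)
  have XY: "is_XY_path (block (side sw)) (block (side (\<not> sw))) (path_verts L f)"
    unfolding is_XY_path_def ends using f c(2,3) by (auto simp: verts)
  then have "is_XY_path A B (path_verts L f) \<or> is_XY_path B A (path_verts L f)"
    by (cases sw) (simp_all add: side_def)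
  then show ?thesis
    using copy XY no_repeats_if_code[OF c(1,4) f] count_ST_if_code[OF c(1) f] c(5)
    by (simp add: useful_copy_def useful_path_def verts)
qed

definition special_edge :: "'a \<Rightarrow> 'a \<Rightarrow> bool" where
  "special_edge x y \<longleftrightarrow> E x y \<and> (x \<in> typical PS \<and> y \<in> A \<union> T \<or> x \<in> typical PT \<and> y \<in> B \<union> S)"

lemma d_nonneg: "0 \<le> d"
  using slack m_nonneg by linarith

(* Every special edge has one of the types in special_configs; the in-degree conditions provide
   the many in-neighbours of the head. *)
lemma special_edge_config:
  assumes "special_edge x y"
  obtains p q h where "(p, q, h) \<in> special_configs" "x \<in> typical p" "y \<in> block q"
    "d / 2 \<le> real (card {w \<in> block h. E w y})"
proof -
  consider (SA) "x \<in> typical PS" "y \<in> A" | (ST) "x \<in> typical PS" "y \<in> T"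
    | (TB) "x \<in> typical PT" "y \<in> B" | (TS) "x \<in> typical PT" "y \<in> S"
    using assms unfolding special_edge_def by blast
  then show ?thesis
  proof cases
    case SA
    then have "d / 2 \<le> real (card {w \<in> block PB. E w y})"
      using in_degree(1) d_nonneg by (fastforce simp: indeg_in_def)
    then show ?thesis using SA by (intro that[of PS PA PB]) (simp_all add: special_configs_def)
  next
    case TB
    then have "d / 2 \<le> real (card {w \<in> block PA. E w y})"
      using in_degree(2) d_nonneg by (fastforce simp: indeg_in_def)
    then show ?thesis using TB by (intro that[of PT PB PA]) (simp_all add: special_configs_def)
  next
    case ST
    then have "d / 2 \<le> real (card {w \<in> block PB. E w y}) \<or> d / 2 \<le> real (card {w \<in> block PT. E w y})"
      using in_degree(4) half_in_one_part[OF disjoint(5) finite_parts(2,4)] by (simp add: indeg_in_def)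
    then show ?thesis
      using ST that[of PS PT PB] that[of PS PT PT] by (auto simp: special_configs_def)
  next
    case TS
    then have "d / 2 \<le> real (card {w \<in> block PA. E w y}) \<or> d / 2 \<le> real (card {w \<in> block PS. E w y})"
      using in_degree(3) half_in_one_part[OF disjoint(2) finite_parts(1,3)] by (simp add: indeg_in_def)
    then show ?thesis
      using TS that[of PT PS PA] that[of PT PS PS] by (auto simp: special_configs_def)
  qed
qed

lemma out_degree_across:
  assumes "x \<in> X" "X \<inter> Y = {}" "X \<union> Y = V"
  shows "real n / 2 - real (card X) + 1 \<le> real (card {y \<in> Y. E x y})"
proof -
  have fin: "finite X" "finite Y" using assms(3) finite_V by (auto intro: finite_subset)
  have "real n / 2 \<le> real (outdeg_in E V x)"
    using semidegree assms(1,3) unfolding min_semideg_ge_def by blast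
  moreover have "outdeg_in E V x = card {y \<in> X. E x y} + card {y \<in> Y. E x y}"
    unfolding outdeg_in_def using card_filter_Un_disjoint[OF assms(2) fin] assms(3) by simp
  moreover have "card {y \<in> X. E x y} \<le> card (X - {x})"
    using fin edge_in_V by (intro card_mono) auto
  moreover have "card (X - {x}) = card X - 1" "1 \<le> card X"
    using assms(1) fin(1) by (auto simp: Suc_le_eq card_gt_0_iff)
  ultimately show ?thesis by (simp add: of_nat_diff)
qed

(* S-vertices send alpha edges into A u T and T-vertices beta edges into B u S with alpha + beta = 2,
   since |B u S| + |A u T| = n. *)
lemma crossing_out_degrees:
  obtains \<alpha> \<beta> where "\<alpha> + \<beta> = 2"
    "\<And>x. x \<in> S \<Longrightarrow> \<alpha> \<le> real (card {y \<in> A \<union> T. E x y})"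
    "\<And>x. x \<in> T \<Longrightarrow> \<beta> \<le> real (card {y \<in> B \<union> S. E x y})"
proof -
  have "card V = card (B \<union> S) + card (A \<union> T)"
    using disjoint partition finite_parts
    by (subst card_Un_disjoint[symmetric]) (auto intro: arg_cong[of _ _ card])
  then have "(real n / 2 - real (card (B \<union> S)) + 1) + (real n / 2 - real (card (A \<union> T)) + 1) = 2"
    using card_V by (simp add: field_simps)
  then show ?thesis
  proof (rule that)
    show "real n / 2 - real (card (B \<union> S)) + 1 \<le> real (card {y \<in> A \<union> T. E x y})" if "x \<in> S" for x
      using that disjoint partition by (intro out_degree_across) auto
    show "real n / 2 - real (card (A \<union> T)) + 1 \<le> real (card {y \<in> B \<union> S. E x y})" if "x \<in> T" for x
      using that disjoint partition by (intro out_degree_across) auto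
  qed
qed

lemma two_special_edges_from_one_side:
  assumes XY: "(X, Y) = (typical PS, A \<union> T) \<or> (X, Y) = (typical PT, B \<union> S)"
    and two_out: "\<And>x. x \<in> X \<Longrightarrow> 1 < card {y \<in> Y. E x y}"
  shows "has_two_disjoint_edges special_edge"
proof -
  obtain p where p: "X = typical p" using XY by blast
  obtain s1 where s1: "s1 \<in> X" using avoid_typical[of "{}" p] p by auto
  obtain s2 where s2: "s2 \<in> X" "s2 \<noteq> s1" using avoid_typical[of "{s1}" p] p by auto
  have "X \<inter> Y = {}" "finite Y"
    using XY typical_subset[of PS] typical_subset[of PT] disjoint finite_parts by auto
  with s1 s2 have "has_two_disjoint_edges (\<lambda>x y. E x y \<and> x \<in> X \<and> y \<in> Y)"
    by (intro two_disjoint_edges_one_side two_out) auto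
  then show ?thesis
    by (rule has_two_disjoint_edges_mono) (use XY in \<open>auto simp: special_edge_def\<close>)
qed

(* Either one side sends two edges from every vertex, or both sides send at least one. *)
lemma two_disjoint_special_edges: "has_two_disjoint_edges special_edge"
proof -
  obtain \<alpha> \<beta> where "\<alpha> + \<beta> = 2"
    and out_S: "\<And>x. x \<in> S \<Longrightarrow> \<alpha> \<le> real (card {y \<in> A \<union> T. E x y})"
    and out_T: "\<And>x. x \<in> T \<Longrightarrow> \<beta> \<le> real (card {y \<in> B \<union> S. E x y})"
    using crossing_out_degrees by blast
  have typical_ST: "typical PS \<subseteq> S" "typical PT \<subseteq> T"
    using typical_subset[of PS] typical_subset[of PT] by simp_all
  consider "1 < \<alpha>" | "1 < \<beta>" | "1 \<le> \<alpha>" "1 \<le> \<beta>" using \<open>\<alpha> + \<beta> = 2\<close> by linarith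
  then show ?thesis
  proof cases
    case 1
    then show ?thesis using out_S typical_ST
      by (intro two_special_edges_from_one_side[of "typical PS" "A \<union> T"]) fastforce+
  next
    case 2
    then show ?thesis using out_T typical_ST
      by (intro two_special_edges_from_one_side[of "typical PT" "B \<union> S"]) fastforce+
  next
    case 3
    have nonempty: "\<exists>y \<in> Y. E x y" if "1 \<le> real (card {y \<in> Y. E x y})" for x Y
      using exists_avoiding[of "{}" Y "E x"] that by simp
    have pick: "\<exists>x \<in> typical p. x \<noteq> z" for p z using avoid_typical[of "{z}" p] by auto
    have "has_two_disjoint_edges
        (\<lambda>x y. E x y \<and> (x \<in> typical PS \<and> y \<in> A \<union> T \<or> x \<in> typical PT \<and> y \<in> B \<union> S))"
    proof (rule two_disjoint_edges_balanced[OF _ _ _ _ _ pick pick])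
      show "typical PS \<inter> (A \<union> T) = {}" "typical PT \<inter> (B \<union> S) = {}" "(A \<union> T) \<inter> (B \<union> S) = {}"
        "typical PS \<subseteq> B \<union> S" "typical PT \<subseteq> A \<union> T"
        using typical_ST disjoint by blast+
      show "\<exists>y \<in> A \<union> T. E x y" if "x \<in> typical PS" for x
        using nonempty out_S[of x] that typical_ST 3 by force
      show "\<exists>y \<in> B \<union> S. E x y" if "x \<in> typical PT" for x
        using nonempty out_T[of x] that typical_ST 3 by force
    qed
    then show ?thesis unfolding special_edge_def .
  qed
qed

(* A path with a directed 2-path: seed a single typical vertex at its middle. *)
lemma useful_copy_with_directed_step:
  assumes L: "length L = 8" and i: "1 \<le> i" "i \<le> 7" "L ! (i - 1) = L ! i"
    and F: "finite F" "card F \<le> 13"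
  shows "\<exists>f. useful_copy L sw f \<and> (\<forall>j\<le>8. f j \<notin> F)"
proof -
  define c where "c = directed_code i (L ! i) sw"
  have code: "useful_code sw c" "code_fits L c i i None PA"
    using directed_code_ok[OF i refl] unfolding c_def by auto
  obtain v where v: "v \<in> typical (c ! i)" "v \<notin> F"
    using avoid_typical[OF F(1)] F(2) by fastforce
  have "\<exists>f. is_copy V E L f \<and> (\<forall>j\<le>8. f j \<in> block (c ! j)) \<and>
      (\<forall>j\<le>8. j < i \<or> i < j \<longrightarrow> f j \<notin> insert v F) \<and> (\<forall>j \<in> {i..i}. f j = v)"
    using v i(2) F typical_subset
    by (intro embed_along_code[OF L, where hub = None and q = PA and c = c and g = "\<lambda>_. v"] code(2))
      auto
  then obtain f where f: "is_copy V E L f" "\<forall>j\<le>8. f j \<in> block (c ! j)"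
    and avoid: "\<forall>j\<le>8. j < i \<or> i < j \<longrightarrow> f j \<notin> insert v F" and seed: "f i = v" by auto
  have "\<forall>j\<le>8. f j \<notin> F" using avoid seed v(2) by (metis insertCI linorder_neqE_nat)
  then show ?thesis using useful_copy_if_code[OF L f(1) code(1) f(2)] by blast
qed

lemma embed_through_special_edge:
  assumes L: "length L = 8" and code: "code_through_edge L sw p q h c ix iy"
    and xy: "E x y" "x \<in> typical p" "y \<in> block q" "d / 2 \<le> real (card {w \<in> block h. E w y})"
    and F: "x \<in> F" "y \<in> F" "finite F" "card F \<le> 14"
  shows "\<exists>f. is_copy V E L f \<and> (\<forall>j\<le>8. f j \<in> block (c ! j)) \<and> (\<forall>j\<le>8. f j \<in> F \<longrightarrow> f j = x \<or> f j = y)"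
proof -
  have c: "c ! ix = p" "c ! iy = q" "ix = Suc iy \<or> iy = Suc ix" "ix \<le> 8" "iy \<le> 8"
    "L ! min ix iy = (ix < iy)" "code_fits L c (min ix iy) (max ix iy) (Some iy) h"
    using code by (simp_all add: code_through_edge_def)
  define g where "g j = (if j = ix then x else y)" for j
  have seed: "{min ix iy..max ix iy} = {ix, iy}" "ix \<noteq> iy" using c(3) by auto
  have "x \<noteq> y" using xy(1) edge_in_V by blast
  have "\<exists>f. is_copy V E L f \<and> (\<forall>j\<le>8. f j \<in> block (c ! j)) \<and>
      (\<forall>j\<le>8. j < min ix iy \<or> max ix iy < j \<longrightarrow> f j \<notin> F) \<and> (\<forall>j \<in> {min ix iy..max ix iy}. f j = g j)"
  proof (rule embed_along_code[OF L _ _ _ _ _ _ _ _ c(7) F(3,4)])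
    show "min ix iy \<le> max ix iy" "max ix iy \<le> Suc (min ix iy)" "max ix iy \<le> 8"
      using c(3-5) by auto
    show "inj_on g {min ix iy..max ix iy}"
      unfolding seed g_def using \<open>x \<noteq> y\<close> seed by (auto simp: inj_on_def)
    show "g j \<in> F \<and> g j \<in> block (c ! j)" if "j \<in> {min ix iy..max ix iy}" for j
      using that F xy(2,3) c(1,2) typical_subset unfolding seed g_def by auto
    show "g j \<in> typical (c ! j)" if "j \<in> {min ix iy..max ix iy}" "Some iy \<noteq> Some j" for j
      using that xy(2) c(1) unfolding seed g_def by auto
    show "j \<in> {min ix iy..max ix iy} \<and> d / 2 \<le> real (card {w \<in> block h. E w (g j)})"
      if "Some iy = Some j" for j
      using that xy(4) seed unfolding g_def by auto
    show "min ix iy < max ix iy \<Longrightarrow>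
        (if L ! min ix iy then E (g (min ix iy)) (g (max ix iy)) else E (g (max ix iy)) (g (min ix iy)))"
      using c(6) xy(1) seed(2) unfolding g_def by (cases "ix < iy") (auto simp: min_def max_def)
  qed
  then obtain f where f: "is_copy V E L f" "\<forall>j\<le>8. f j \<in> block (c ! j)"
    "\<forall>j\<le>8. j < min ix iy \<or> max ix iy < j \<longrightarrow> f j \<notin> F" "\<forall>j \<in> {ix, iy}. f j = g j"
    unfolding seed by blast
  have "\<forall>j\<le>8. f j \<in> F \<longrightarrow> f j = x \<or> f j = y"
  proof (intro allI impI)
    fix j :: nat assume "j \<le> 8" "f j \<in> F"
    then have "j \<in> {ix, iy}" using f(3) seed(1) by (metis atLeastAtMost_iff not_le)
    then show "f j = x \<or> f j = y" using f(4) unfolding g_def by auto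
  qed
  with f(1,2) show ?thesis by blast
qed

lemma useful_copy_antidirected:
  assumes L: "L = antidirected ob" and edge: "special_edge x y"
    and F: "x \<in> F" "y \<in> F" "finite F" "card F \<le> 14"
  shows "\<exists>f. useful_copy L sw f \<and> (\<forall>j\<le>8. f j \<in> F \<longrightarrow> f j = x \<or> f j = y)"
proof -
  have L8: "length L = 8" using L by (simp add: antidirected_def)
  obtain p q h where cf: "(p, q, h) \<in> special_configs" "x \<in> typical p" "y \<in> block q"
    "d / 2 \<le> real (card {w \<in> block h. E w y})"
    using special_edge_config[OF edge] by blast
  obtain c ix iy where code: "code_through_edge L sw p q h c ix iy"
    using antidirected_code_ok[OF cf(1), of ob sw] L
    by (cases "antidirected_code ob sw p q h") auto
  have "E x y" using edge by (simp add: special_edge_def)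
  then obtain f where f: "is_copy V E L f" "\<forall>j\<le>8. f j \<in> block (c ! j)"
    and meets: "\<forall>j\<le>8. f j \<in> F \<longrightarrow> f j = x \<or> f j = y"
    using embed_through_special_edge[OF L8 code _ cf(2-4) F] by blast
  have "useful_code sw c" using code by (simp add: code_through_edge_def)
  then have "useful_copy L sw f" by (rule useful_copy_if_code[OF L8 f(1) _ f(2)])
  with meets show ?thesis by blast
qed

lemma useful_copy_through_special_edge:
  assumes L: "length L = 8" and edge: "special_edge x y"
    and F: "x \<in> F" "y \<in> F" "finite F" "card F \<le> 13"
  shows "\<exists>f. useful_copy L sw f \<and> (\<forall>j\<le>8. f j \<in> F \<longrightarrow> f j = x \<or> f j = y)"
proof (cases "\<exists>i. 1 \<le> i \<and> i \<le> 7 \<and> L ! (i - 1) = L ! i")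
  case True
  then obtain i where "1 \<le> i" "i \<le> 7" "L ! (i - 1) = L ! i" by blast
  from useful_copy_with_directed_step[OF L this F(3,4)] show ?thesis by blast
next
  case False
  then have "L = antidirected (L ! 0)" using antidirected_if_no_directed_step[OF L] by blast
  from useful_copy_antidirected[OF this edge F(1-3)] show ?thesis using F(4) by simp
qed

(* The proposition inside the locale: embed the first path through one special edge, then the
   second through the other, avoiding the first copy. *)
theorem two_disjoint_useful_copies:
  assumes "length L1 = 8" "length L2 = 8"
  shows "\<exists>f1 f2. useful_copy L1 sw1 f1 \<and> useful_copy L2 sw2 f2 \<and> f1 ` {0..8} \<inter> f2 ` {0..8} = {}"
proof -
  obtain x1 y1 x2 y2 where e: "special_edge x1 y1" "special_edge x2 y2"
    and dis: "x1 \<noteq> x2" "x1 \<noteq> y2" "y1 \<noteq> x2" "y1 \<noteq> y2"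
    using two_disjoint_special_edges unfolding has_two_disjoint_edges_def by blast
  define F1 where "F1 = {x1, y1, x2, y2}"
  have "x1 \<in> F1" "y1 \<in> F1" "finite F1" "card F1 \<le> 13"
    unfolding F1_def using card_length[of "[x1, y1, x2, y2]"] by simp_all
  then obtain f1 where f1: "useful_copy L1 sw1 f1" "\<forall>j\<le>8. f1 j \<in> F1 \<longrightarrow> f1 j = x1 \<or> f1 j = y1"
    using useful_copy_through_special_edge[OF assms(1) e(1)] by blast
  define F2 where "F2 = f1 ` {0..8} \<union> {x2, y2}"
  have "card F2 \<le> card (f1 ` {0..8}) + card {x2, y2}" unfolding F2_def by (rule card_Un_le)
  moreover have "card (f1 ` {0..8::nat}) \<le> 9" using card_image_le[of "{0..8::nat}" f1] by simp
  moreover have "card {x2, y2} \<le> 2" using card_length[of "[x2, y2]"] by simp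
  ultimately have "card F2 \<le> 13" by linarith
  moreover have "x2 \<in> F2" "y2 \<in> F2" "finite F2" unfolding F2_def by simp_all
  ultimately obtain f2 where f2: "useful_copy L2 sw2 f2" "\<forall>j\<le>8. f2 j \<in> F2 \<longrightarrow> f2 j = x2 \<or> f2 j = y2"
    using useful_copy_through_special_edge[OF assms(2) e(2)] by blast
  have "f1 ` {0..8} \<inter> f2 ` {0..8} = {}"
  proof (rule ccontr)
    assume "f1 ` {0..8} \<inter> f2 ` {0..8} \<noteq> {}"
    then obtain j1 j2 where j: "j1 \<le> 8" "j2 \<le> 8" "f1 j1 = f2 j2" by auto
    then have "f2 j2 \<in> F2" unfolding F2_def by (metis UnI1 atLeastAtMost_iff image_eqI le0)
    then have "f2 j2 \<in> {x2, y2}" using f2(2) j(2) by blast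
    then have "f1 j1 \<in> {x1, y1}" using f1(2) j(1,3) unfolding F1_def by auto
    then show False using \<open>f2 j2 \<in> {x2, y2}\<close> j(3) dis by auto
  qed
  then show ?thesis using f1(1) f2(1) by blast
qed

end

lemma exists_threshold:
  fixes w :: real
  assumes "0 < w" "\<And>x. 0 < x \<Longrightarrow> x \<le> w \<Longrightarrow> Q x"
  shows "\<exists>x0>0. \<forall>x. 0 < x \<and> x \<le> x0 \<longrightarrow> Q x"
  using assms by auto

(* The hierarchy eta <= tau, eps1 <= eta/8, eps <= (eta/8)^3 and n >= 100/eta, in the
   quantifier form of the proposition. *)
lemma parameter_hierarchy:
  fixes P :: "real \<Rightarrow> real \<Rightarrow> real \<Rightarrow> real \<Rightarrow> nat \<Rightarrow> bool"
  assumes "\<And>\<tau> \<eta> \<epsilon>\<^sub>1 \<epsilon> n. 0 < \<eta> \<Longrightarrow> \<eta> \<le> \<tau> \<Longrightarrow> 0 < \<epsilon>\<^sub>1 \<Longrightarrow> \<epsilon>\<^sub>1 \<le> \<eta> / 8 \<Longrightarrow>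
      0 < \<epsilon> \<Longrightarrow> \<epsilon> \<le> (\<eta> / 8) ^ 3 \<Longrightarrow> 100 \<le> \<eta> * real n \<Longrightarrow> P \<tau> \<eta> \<epsilon>\<^sub>1 \<epsilon> n"
  shows "\<forall>\<tau>>0. \<tau> \<le> 1 \<longrightarrow> (\<exists>\<eta>0>0. \<forall>\<eta>. 0 < \<eta> \<and> \<eta> \<le> \<eta>0 \<longrightarrow>
    (\<exists>\<epsilon>10>0. \<forall>\<epsilon>\<^sub>1. 0 < \<epsilon>\<^sub>1 \<and> \<epsilon>\<^sub>1 \<le> \<epsilon>10 \<longrightarrow>
    (\<exists>\<epsilon>0>0. \<forall>\<epsilon>. 0 < \<epsilon> \<and> \<epsilon> \<le> \<epsilon>0 \<longrightarrow> (\<exists>N::nat. \<forall>n\<ge>N. P \<tau> \<eta> \<epsilon>\<^sub>1 \<epsilon> n))))"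
proof (intro allI impI)
  fix \<tau> :: real assume "0 < \<tau>"
  have large_n: "\<exists>N::nat. \<forall>n\<ge>N. P \<tau> \<eta> \<epsilon>\<^sub>1 \<epsilon> n"
    if "0 < \<eta>" "\<eta> \<le> \<tau>" "0 < \<epsilon>\<^sub>1" "\<epsilon>\<^sub>1 \<le> \<eta> / 8" "0 < \<epsilon>" "\<epsilon> \<le> (\<eta> / 8) ^ 3" for \<eta> \<epsilon>\<^sub>1 \<epsilon>
  proof (intro exI allI impI)
    fix n assume "nat \<lceil>100 / \<eta>\<rceil> \<le> n"
    then have "100 / \<eta> \<le> real n" by linarith
    then have "100 \<le> \<eta> * real n" using \<open>0 < \<eta>\<close> by (simp add: field_simps)
    then show "P \<tau> \<eta> \<epsilon>\<^sub>1 \<epsilon> n" using that by (intro assms)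
  qed
  show "\<exists>\<eta>0>0. \<forall>\<eta>. 0 < \<eta> \<and> \<eta> \<le> \<eta>0 \<longrightarrow> (\<exists>\<epsilon>10>0. \<forall>\<epsilon>\<^sub>1. 0 < \<epsilon>\<^sub>1 \<and> \<epsilon>\<^sub>1 \<le> \<epsilon>10 \<longrightarrow>
      (\<exists>\<epsilon>0>0. \<forall>\<epsilon>. 0 < \<epsilon> \<and> \<epsilon> \<le> \<epsilon>0 \<longrightarrow> (\<exists>N::nat. \<forall>n\<ge>N. P \<tau> \<eta> \<epsilon>\<^sub>1 \<epsilon> n)))"
  proof (rule exists_threshold[OF \<open>0 < \<tau>\<close>])
    fix \<eta> :: real assume "0 < \<eta>" "\<eta> \<le> \<tau>"
    then show "\<exists>\<epsilon>10>0. \<forall>\<epsilon>\<^sub>1. 0 < \<epsilon>\<^sub>1 \<and> \<epsilon>\<^sub>1 \<le> \<epsilon>10 \<longrightarrow>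
        (\<exists>\<epsilon>0>0. \<forall>\<epsilon>. 0 < \<epsilon> \<and> \<epsilon> \<le> \<epsilon>0 \<longrightarrow> (\<exists>N::nat. \<forall>n\<ge>N. P \<tau> \<eta> \<epsilon>\<^sub>1 \<epsilon> n))"
      by (intro exists_threshold[of "\<eta> / 8"] exists_threshold[of "(\<eta> / 8) ^ 3"] large_n) simp_all
  qed
qed

lemma cube_root_le:
  fixes \<epsilon> b :: real
  assumes "0 \<le> \<epsilon>" "0 < b" "\<epsilon> \<le> b ^ 3"
  shows "\<epsilon> powr (1 / 3) \<le> b"
proof -
  have "\<epsilon> powr (1 / 3) \<le> (b ^ 3) powr (1 / 3)" using assms by (intro powr_mono2) auto
  also have "\<dots> = b" using powr_powr[of b 3 "1 / 3"] assms(2) by simp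
  finally show ?thesis .
qed

(* The ABST-conditions with parameters in the hierarchy give the locale, with r = eps^(1/3) n,
   m = eps1 n and d = eta1 n. *)
lemma ABST_partition_from_conditions:
  assumes params: "0 < \<eta>\<^sub>1" "\<eta>\<^sub>1 \<le> \<tau>" "0 < \<epsilon>\<^sub>1" "\<epsilon>\<^sub>1 \<le> \<eta>\<^sub>1 / 8" "0 < \<epsilon>" "\<epsilon> \<le> (\<eta>\<^sub>1 / 8) ^ 3"
      "100 \<le> \<eta>\<^sub>1 * real n"
    and graph: "digraph V E" "card V = n" "min_semideg_ge V E (real n / 2)"
    and disjoint: "A \<inter> B = {}" "A \<inter> S = {}" "A \<inter> T = {}" "B \<inter> S = {}" "B \<inter> T = {}" "S \<inter> T = {}"
    and partition: "A \<union> B \<union> S \<union> T = V"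
    and conditions: "ABST_conditions V E A B S T n \<tau> \<epsilon>\<^sub>1 \<eta>\<^sub>1 \<epsilon>"
  shows "ABST_partition V E A B S T n (\<epsilon> powr (1 / 3) * real n) (\<epsilon>\<^sub>1 * real n) (\<eta>\<^sub>1 * real n)"
proof -
  have "\<epsilon> powr (1 / 3) \<le> \<eta>\<^sub>1 / 8" using params by (intro cube_root_le) auto
  then have r: "\<epsilon> powr (1 / 3) * real n \<le> \<eta>\<^sub>1 / 8 * real n" by (intro mult_right_mono) auto
  have "\<epsilon>\<^sub>1 * real n \<le> \<eta>\<^sub>1 / 8 * real n" using params by (intro mult_right_mono) auto
  then have slack: "\<epsilon> powr (1 / 3) * real n + 23 < \<eta>\<^sub>1 * real n / 2 - \<epsilon>\<^sub>1 * real n"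
    using r params(7) by linarith
  have "\<eta>\<^sub>1 * real n \<le> \<tau> * real n" using params by (intro mult_right_mono) auto
  note c = conditions[unfolded ABST_conditions_def Let_def]
  have sizes: "\<tau> * real n \<le> real (card A)" "\<tau> * real n \<le> real (card B)"
    "\<tau> * real n \<le> real (card S)" "\<tau> * real n \<le> real (card T)" using c by blast+
  have degrees:
    "\<forall>x\<in>A. \<eta>\<^sub>1 * real n \<le> real (outdeg_in E B x) \<and> \<eta>\<^sub>1 * real n \<le> real (indeg_in E B x)"
    "\<forall>x\<in>B. \<eta>\<^sub>1 * real n \<le> real (outdeg_in E A x) \<and> \<eta>\<^sub>1 * real n \<le> real (indeg_in E A x)"
    "\<forall>x\<in>S. \<eta>\<^sub>1 * real n \<le> real (outdeg_in E (B \<union> S) x) \<and> \<eta>\<^sub>1 * real n \<le> real (indeg_in E (A \<union> S) x)"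
    "\<forall>x\<in>T. \<eta>\<^sub>1 * real n \<le> real (outdeg_in E (A \<union> T) x) \<and> \<eta>\<^sub>1 * real n \<le> real (indeg_in E (B \<union> T) x)"
    using c by blast+
  from c show ?thesis
  proof (elim conjE, unfold_locales)
    show "digraph V E" "card V = n" "min_semideg_ge V E (real n / 2)" by (fact graph)+
    show "A \<inter> B = {}" "A \<inter> S = {}" "A \<inter> T = {}" "B \<inter> S = {}" "B \<inter> T = {}" "S \<inter> T = {}"
      by (fact disjoint)+
    show "A \<union> B \<union> S \<union> T = V" by (fact partition)
    show "\<eta>\<^sub>1 * real n \<le> real (card A)" "\<eta>\<^sub>1 * real n \<le> real (card B)"
      "\<eta>\<^sub>1 * real n \<le> real (card S)" "\<eta>\<^sub>1 * real n \<le> real (card T)"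
      using sizes \<open>\<eta>\<^sub>1 * real n \<le> \<tau> * real n\<close> by linarith+
    show "0 \<le> \<epsilon> powr (1 / 3) * real n" by simp
    show "\<forall>x\<in>A. \<eta>\<^sub>1 * real n \<le> real (indeg_in E B x)" "\<forall>x\<in>B. \<eta>\<^sub>1 * real n \<le> real (indeg_in E A x)"
      "\<forall>x\<in>S. \<eta>\<^sub>1 * real n \<le> real (indeg_in E (A \<union> S) x)"
      "\<forall>x\<in>T. \<eta>\<^sub>1 * real n \<le> real (indeg_in E (B \<union> T) x)"
      using degrees by blast+
    show "\<epsilon> powr (1 / 3) * real n + 23 < \<eta>\<^sub>1 * real n / 2 - \<epsilon>\<^sub>1 * real n" by (fact slack)
  qed assumption+ (* the bounds on atypical vertices are literally among the conditions *)
qed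

lemma useful_paths_under_ABST_conditions:
  assumes "0 < \<eta>\<^sub>1" "\<eta>\<^sub>1 \<le> \<tau>" "0 < \<epsilon>\<^sub>1" "\<epsilon>\<^sub>1 \<le> \<eta>\<^sub>1 / 8" "0 < \<epsilon>" "\<epsilon> \<le> (\<eta>\<^sub>1 / 8) ^ 3"
      "100 \<le> \<eta>\<^sub>1 * real n"
  shows "\<forall>(V::'a set) E A B S T (L1::bool list) (L2::bool list) (sw1::bool) (sw2::bool).
      digraph V E \<and> card V = n \<and> min_semideg_ge V E (real n / 2) \<and>
      A \<inter> B = {} \<and> A \<inter> S = {} \<and> A \<inter> T = {} \<and> B \<inter> S = {} \<and> B \<inter> T = {} \<and> S \<inter> T = {} \<and>
      A \<union> B \<union> S \<union> T = V \<and>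
      ABST_conditions V E A B S T n \<tau> \<epsilon>\<^sub>1 \<eta>\<^sub>1 \<epsilon> \<and>
      length L1 = 8 \<and> length L2 = 8
      \<longrightarrow> (\<exists>f1 f2. is_copy V E L1 f1 \<and> is_copy V E L2 f2 \<and>
            f1 ` {0..8} \<inter> f2 ` {0..8} = {} \<and>
            useful_path A B S T (path_verts L1 f1) \<and> useful_path A B S T (path_verts L2 f2) \<and>
            is_XY_path (if sw1 then B else A) (if sw1 then A else B) (path_verts L1 f1) \<and>
            is_XY_path (if sw2 then B else A) (if sw2 then A else B) (path_verts L2 f2))"
proof (intro allI impI, elim conjE)
  fix V :: "'a set" and E A B S T and L1 L2 :: "bool list" and sw1 sw2 :: bool
  assume hyps: "digraph V E" "card V = n" "min_semideg_ge V E (real n / 2)"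
    "A \<inter> B = {}" "A \<inter> S = {}" "A \<inter> T = {}" "B \<inter> S = {}" "B \<inter> T = {}" "S \<inter> T = {}"
    "A \<union> B \<union> S \<union> T = V" "ABST_conditions V E A B S T n \<tau> \<epsilon>\<^sub>1 \<eta>\<^sub>1 \<epsilon>"
    and L: "length L1 = 8" "length L2 = 8"
  interpret ABST_partition V E A B S T n "\<epsilon> powr (1 / 3) * real n" "\<epsilon>\<^sub>1 * real n" "\<eta>\<^sub>1 * real n"
    by (rule ABST_partition_from_conditions[OF assms hyps])
  obtain f1 f2 where f: "useful_copy L1 sw1 f1" "useful_copy L2 sw2 f2" "f1 ` {0..8} \<inter> f2 ` {0..8} = {}"
    using two_disjoint_useful_copies[OF L] by blast
  show "\<exists>f1 f2. is_copy V E L1 f1 \<and> is_copy V E L2 f2 \<and> f1 ` {0..8} \<inter> f2 ` {0..8} = {} \<and>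
      useful_path A B S T (path_verts L1 f1) \<and> useful_path A B S T (path_verts L2 f2) \<and>
      is_XY_path (if sw1 then B else A) (if sw1 then A else B) (path_verts L1 f1) \<and>
      is_XY_path (if sw2 then B else A) (if sw2 then A else B) (path_verts L2 f2)"
    using f unfolding useful_copy_def by (cases sw1; cases sw2; simp add: side_def; blast)
qed

theorem proposition7p3:
  "\<forall>\<tau>>0. \<tau> \<le> 1 \<longrightarrow> (\<exists>\<eta>0>0. \<forall>\<eta>\<^sub>1. 0 < \<eta>\<^sub>1 \<and> \<eta>\<^sub>1 \<le> \<eta>0 \<longrightarrow>
   (\<exists>\<epsilon>10>0. \<forall>\<epsilon>\<^sub>1. 0 < \<epsilon>\<^sub>1 \<and> \<epsilon>\<^sub>1 \<le> \<epsilon>10 \<longrightarrow>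
   (\<exists>\<epsilon>0>0. \<forall>\<epsilon>. 0 < \<epsilon> \<and> \<epsilon> \<le> \<epsilon>0 \<longrightarrow>
   (\<exists>N::nat. \<forall>n\<ge>N. \<forall>(V::'a set) E A B S T (L1::bool list) (L2::bool list) (sw1::bool) (sw2::bool).
      digraph V E \<and> card V = n \<and> min_semideg_ge V E (real n / 2) \<and>
      A \<inter> B = {} \<and> A \<inter> S = {} \<and> A \<inter> T = {} \<and> B \<inter> S = {} \<and> B \<inter> T = {} \<and> S \<inter> T = {} \<and>
      A \<union> B \<union> S \<union> T = V \<and>
      ABST_conditions V E A B S T n \<tau> \<epsilon>\<^sub>1 \<eta>\<^sub>1 \<epsilon> \<and>
      length L1 = 8 \<and> length L2 = 8
      \<longrightarrow> (\<exists>f1 f2. is_copy V E L1 f1 \<and> is_copy V E L2 f2 \<and>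
            f1 ` {0..8} \<inter> f2 ` {0..8} = {} \<and>
            useful_path A B S T (path_verts L1 f1) \<and> useful_path A B S T (path_verts L2 f2) \<and>
            is_XY_path (if sw1 then B else A) (if sw1 then A else B) (path_verts L1 f1) \<and>
            is_XY_path (if sw2 then B else A) (if sw2 then A else B) (path_verts L2 f2))))))"
  by (rule parameter_hierarchy) (rule useful_paths_under_ABST_conditions)

end
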